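(* Let $\mathcal A$ be a finite alphabet and let $\Psi$ be a symmetry on $\mathcal A^*$. Then $\Psi$ is either a morphism or an antimorphism.
   Context: A symmetry on $\mathcal A^*$ is a map $\Psi:\mathcal A^*\to\mathcal A^*$ such that (1) $\Psi$ is a bijection and (2) for all $w,v\in\mathcal A^*$, the number of occurrences of $w$ in $v$ equals the number of occurrences of $\Psi(w)$ in $\Psi(v)$ (an occurrence of $w$ in $v=v_1\cdots v_m$ is an index $i$ such that $w$ is a prefix of $v_iv_{i+1}\cdots v_m$). $\Psi$ is a morphism if $\Psi(vw)=\Psi(v)\Psi(w)$ and an antimorphism if $\Psi(vw)=\Psi(w)\Psi(v)$ for all $v,w\in\mathcal A^*$. *)

theory Defs
  imports Main "HOL-Library.Sublist"
begin

definition occ :: "'a list \<Rightarrow> 'a list \<Rightarrow> nat" where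
  "occ w v = card {i. i < length v \<and> prefix w (drop i v)}"

definition symmetry :: "('a list \<Rightarrow> 'a list) \<Rightarrow> bool" where
  "symmetry \<Psi> \<longleftrightarrow> bij \<Psi> \<and> (\<forall>w v. occ w v = occ (\<Psi> w) (\<Psi> v))"

definition morphism :: "('a list \<Rightarrow> 'a list) \<Rightarrow> bool" where
  "morphism \<Psi> \<longleftrightarrow> (\<forall>v w. \<Psi> (v @ w) = \<Psi> v @ \<Psi> w)"

definition antimorphism :: "('a list \<Rightarrow> 'a list) \<Rightarrow> bool" where
  "antimorphism \<Psi> \<longleftrightarrow> (\<forall>v w. \<Psi> (v @ w) = \<Psi> w @ \<Psi> v)"

end

theory Submission
  imports Defs "HOL-Library.Multiset"
begin

text \<open>A symmetry preserves the number of occurrences of the empty word, i.e. length, so it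
  permutes letters via some injective \<open>f\<close>. Comparing letter counts, each two-letter word
  \<open>ab\<close> is sent to \<open>f(a)f(b)\<close> or \<open>f(b)f(a)\<close>, and looking at the image of a three-letter word
  \<open>bac\<close> shows that the choice is the same for all pairs. Finally a word of length
  \<open>m \<ge> 3\<close> is determined by the numbers of occurrences of its factors of length \<open>< m\<close>, so
  induction on length shows that the symmetry coincides with \<open>map f\<close> or with
  \<open>rev \<circ> map f\<close>.\<close>

lemma prefix_iff_take: "prefix u v \<longleftrightarrow> length u \<le> length v \<and> take (length u) v = u"
  by (metis append_eq_conv_conj prefix_def prefix_length_le append_take_drop_id)

lemma prefix_map_iff: "inj f \<Longrightarrow> prefix (map f u) (map f v) \<longleftrightarrow> prefix u v"
  by (metis map_mono_prefix prefix_map_rightE inj_map_eq_map)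

lemma butlast_tl_eq_imp_eq:
  assumes "2 \<le> length x" "butlast x = butlast y" "tl x = tl y"
  shows "x = y"
proof -
  obtain a x' where x: "x = a # x'" and "x' \<noteq> []"
    using assms(1) by (cases x) fastforce+
  moreover obtain b where "y = b # x'"
    using assms(3) \<open>x' \<noteq> []\<close> x by (cases y) auto
  ultimately show ?thesis
    using assms(2) by simp
qed

lemma mset_eq_length_2_imp_eq_or_rev:
  assumes "mset x = mset y" "length x = 2"
  shows "x = y \<or> x = rev y"
proof -
  have "length y = 2"
    using assms by (metis size_mset)
  then obtain p q r s where "x = [p, q]" "y = [r, s]"
    using assms(2) by (auto simp: length_Suc_conv numeral_2_eq_2)
  with assms(1) show ?thesis
    by (auto simp: add_eq_conv_ex)
qed

lemma occ_conv_sum: "occ w v = (\<Sum>i<length v. of_bool (prefix w (drop i v)))"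
  by (simp add: occ_def Int_def)

lemma occ_Nil [simp]: "occ w [] = 0"
  by (simp add: occ_def)

lemma occ_Cons: "occ w (c # v) = of_bool (prefix w (c # v)) + occ w v"
  by (simp add: occ_conv_sum sum.lessThan_Suc_shift del: sum.lessThan_Suc)

lemma occ_snoc: "occ w (v @ [c]) = occ w v + of_bool (suffix w (v @ [c]))"
proof (induction v)
  case Nil
  then show ?case by (cases w) (auto simp: occ_Cons suffix_Cons)
next
  case (Cons c' v)
  then show ?case
    using prefix_snoc[of w "c' # v" c]
    by (auto simp: occ_Cons suffix_Cons dest: prefix_length_le suffix_length_le)
qed

lemma occ_Nil_left: "occ [] v = length v"
  by (induction v) (simp_all add: occ_Cons)

lemma occ_eq_0_if_longer: "length v < length w \<Longrightarrow> occ w v = 0"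
  by (induction v) (auto simp: occ_Cons dest: prefix_length_le)

lemma occ_rev: "occ (rev w) (rev v) = occ w v"
  by (induction v) (simp_all add: occ_Cons occ_snoc suffix_to_prefix)

lemma occ_map: "inj f \<Longrightarrow> occ (map f w) (map f v) = occ w v"
proof (induction v)
  case (Cons c v)
  then show ?case using prefix_map_iff[of f w "c # v"] by (simp add: occ_Cons)
qed simp

lemma occ_same_length:
  "length u = length v \<Longrightarrow> occ u v = of_bool (u = v \<and> v \<noteq> [])"
  by (cases v) (auto simp: occ_Cons occ_eq_0_if_longer prefix_iff_take)

lemma occ_length_Suc:
  assumes "length x = Suc (length u)" "u \<noteq> []"
  shows "occ u x = of_bool (u = butlast x) + of_bool (u = tl x)"
proof (cases x)
  case (Cons c x')
  with assms have "prefix u x \<longleftrightarrow> u = butlast x"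
    by (auto simp: prefix_iff_take butlast_conv_take)
  with Cons assms show ?thesis
    by (simp add: occ_Cons occ_same_length)
qed (use assms in simp)

lemma occ_length_Suc_Suc:
  assumes "length x = Suc (Suc (length u))" "u \<noteq> []"
  shows "occ u x = of_bool (u = butlast (butlast x)) + of_bool (u = tl (butlast x))
    + of_bool (u = tl (tl x))"
proof (cases x)
  case (Cons c x')
  have "butlast (butlast x) = take (length u) x"
    using assms by (simp add: butlast_conv_take)
  with assms have "prefix u x \<longleftrightarrow> u = butlast (butlast x)"
    by (auto simp: prefix_iff_take)
  moreover have "butlast x' = tl (butlast x)"
    using Cons by (simp add: butlast_tl[symmetric])
  ultimately show ?thesis
    using Cons assms by (simp add: occ_Cons occ_length_Suc)
qed (use assms in simp)

lemma occ_swapped_halves: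
  assumes len: "length x = length y" "3 \<le> length x"
    and swap: "butlast x = tl y" "tl x = butlast y"
    and occ: "occ (butlast (butlast x)) x = occ (butlast (butlast x)) y"
  shows "butlast x = tl x"
proof -
  define Q where "Q = butlast (butlast x)"
  define R where "R = tl (butlast x)"
  have x2: "tl (tl x) = Q"
    unfolding Q_def swap by (simp add: butlast_tl)
  have y1: "butlast (butlast y) = R" and y2: "tl (butlast y) = Q" and y3: "tl (tl y) = R"
    unfolding Q_def R_def swap[symmetric] by (simp_all add: butlast_tl x2[unfolded Q_def])
  have lx: "length x = Suc (Suc (length Q))" and ly: "length y = Suc (Suc (length Q))"
    using len by (simp_all add: Q_def)
  then have "Q \<noteq> []"
    using len by auto
  have "occ Q x = occ Q y"
    using occ by (simp only: Q_def)
  moreover have "occ Q x = 2 + of_bool (Q = R)"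
    using occ_length_Suc_Suc[OF lx \<open>Q \<noteq> []\<close>]
    unfolding Q_def[symmetric] R_def[symmetric] x2 by simp
  moreover have "occ Q y = 1 + 2 * of_bool (Q = R)"
    using occ_length_Suc_Suc[OF ly \<open>Q \<noteq> []\<close>]
    unfolding y1 y2 y3 by simp
  ultimately have "Q = R"
    by (cases "Q = R") simp_all
  show ?thesis
  proof (rule butlast_tl_eq_imp_eq)
    show "2 \<le> length (butlast x)"
      using len by simp
    show "butlast (butlast x) = butlast (tl x)"
      using \<open>Q = R\<close> by (simp add: Q_def R_def butlast_tl)
    show "tl (butlast x) = tl (tl x)"
      using \<open>Q = R\<close> x2 by (simp add: R_def)
  qed
qed

text \<open>The counts of the two factors of length \<open>m - 1\<close> force either
  \<open>butlast x = butlast y \<and> tl x = tl y\<close>, or \<open>butlast x = tl y \<and> tl x = butlast y\<close> with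
  \<open>butlast x \<noteq> tl x\<close>; in the latter case \<open>x\<close> and \<open>y\<close> are distinct 2-periodic words,
  which the count of a factor of length \<open>m - 2\<close> rules out.\<close>

lemma eq_if_occ_shorter_eq:
  assumes len: "length x = length y" "3 \<le> length x"
    and occ: "\<And>u. length u < length x \<Longrightarrow> occ u x = occ u y"
  shows "x = y"
proof -
  have count: "occ u z = of_bool (u = butlast z) + of_bool (u = tl z)"
    if "length u = length x - 1" "length z = length x" for u z
  proof (rule occ_length_Suc)
    show "length z = Suc (length u)" "u \<noteq> []"
      using that len by auto
  qed
  have counts: "of_bool (u = butlast x) + of_bool (u = tl x)
      = (of_bool (u = butlast y) + of_bool (u = tl y) :: nat)"
    if "length u = length x - 1" for u
  proof -
    have "occ u x = occ u y"
      using that len by (intro occ) simp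
    then show ?thesis
      unfolding count[OF that refl] count[OF that len(1)[symmetric]] .
  qed
  have bx: "(1::nat) + of_bool (butlast x = tl x)
      = of_bool (butlast x = butlast y) + of_bool (butlast x = tl y)"
    using counts[of "butlast x"] by simp
  have tx: "of_bool (tl x = butlast x) + (1::nat)
      = of_bool (tl x = butlast y) + of_bool (tl x = tl y)"
    using counts[of "tl x"] by simp
  show ?thesis
  proof (cases "butlast x = butlast y")
    case True
    with tx have "tl x = tl y"
      by (simp add: of_bool_def split: if_splits)
    with True len show ?thesis
      by (simp add: butlast_tl_eq_imp_eq)
  next
    case False
    with bx have "butlast x = tl y" "butlast x \<noteq> tl x"
      by (simp_all add: of_bool_def split: if_splits)
    moreover from this tx have "tl x = butlast y"
      by (simp add: of_bool_def split: if_splits)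
    moreover have "occ (butlast (butlast x)) x = occ (butlast (butlast x)) y"
      using len(2) by (intro occ) simp
    ultimately have "butlast x = tl x"
      using len by (intro occ_swapped_halves[of x y]) simp_all
    with \<open>butlast x \<noteq> tl x\<close> show ?thesis
      by contradiction
  qed
qed

lemma occ_singleton: "occ [a] v = count (mset v) a"
  by (induction v) (simp_all add: occ_Cons)

lemma occ_pair_triple: "occ [s, t] [p, q, r] = of_bool ([s, t] = [p, q]) + of_bool ([s, t] = [q, r])"
  by (simp add: occ_Cons)

definition letter_image :: "('a list \<Rightarrow> 'b list) \<Rightarrow> 'a \<Rightarrow> 'b" where
  "letter_image \<Psi> a = hd (\<Psi> [a])"

context
  fixes \<Psi> :: "'a list \<Rightarrow> 'a list"
  assumes sym: "symmetry \<Psi>"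
begin

lemma occ_symmetry: "occ (\<Psi> w) (\<Psi> v) = occ w v"
  using sym by (simp add: symmetry_def)

lemma inj_symmetry: "inj \<Psi>" and surj_symmetry: "surj \<Psi>"
  using sym by (simp_all add: symmetry_def bij_is_inj bij_is_surj)

lemma symmetry_Nil: "\<Psi> [] = []"
proof -
  obtain z where z: "\<Psi> z = []"
    using surj_symmetry by (metis surjD)
  have "length z = occ [] z"
    by (simp add: occ_Nil_left)
  also have "\<dots> = occ (\<Psi> []) []"
    using occ_symmetry[of "[]" z] z by simp
  finally show ?thesis
    using z by simp
qed

lemma length_symmetry: "length (\<Psi> v) = length v"
  using occ_symmetry[of "[]" v] by (simp add: symmetry_Nil occ_Nil_left)

lemma symmetry_singleton: "\<Psi> [a] = [letter_image \<Psi> a]"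
proof -
  obtain b where "\<Psi> [a] = [b]"
    using length_symmetry[of "[a]"] by (auto simp: length_Suc_conv)
  then show ?thesis
    by (simp add: letter_image_def)
qed

lemma inj_letter_image: "inj (letter_image \<Psi>)"
  using inj_symmetry by (metis injI injD symmetry_singleton list.inject)

lemma occ_symmetry_eq_if_agree_below:
  assumes occ_g: "\<And>u v. occ (g u) (g v) = occ u v"
    and agree: "\<And>u. length u < m \<Longrightarrow> \<Psi> u = g u"
    and "length u < m"
  shows "occ u (\<Psi> v) = occ u (g v)"
proof -
  obtain u' where u: "u = \<Psi> u'"
    using surj_symmetry by (metis surjD)
  then have "\<Psi> u' = g u'"
    using agree \<open>length u < m\<close> length_symmetry by simp
  then show ?thesis
    using occ_symmetry[of u' v] occ_g[of u' v] u by simp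
qed

lemma symmetry_eqI:
  assumes occ_g: "\<And>u v. occ (g u) (g v) = occ u v"
    and length_g: "\<And>v. length (g v) = length v"
    and letters: "\<And>a. \<Psi> [a] = g [a]"
    and pairs: "\<And>a b. \<Psi> [a, b] = g [a, b]"
  shows "\<Psi> v = g v"
proof (induction "length v" arbitrary: v rule: less_induct)
  case less
  consider "v = []" | a where "v = [a]" | a b where "v = [a, b]" | "3 \<le> length v"
    by (cases v; cases "tl v"; cases "tl (tl v)") auto
  then show ?case
  proof cases
    case 1
    then show ?thesis
      using length_g[of "[]"] by (simp add: symmetry_Nil)
  next
    case 4
    have "occ u (\<Psi> v) = occ u (g v)" if "length u < length v" for u
      using occ_g less that by (rule occ_symmetry_eq_if_agree_below)
    with 4 show ?thesis
      using length_symmetry length_g by (intro eq_if_occ_shorter_eq) simp_all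
  qed (simp_all add: letters pairs)
qed

lemma symmetry_pair:
  "\<Psi> [a, b] = [letter_image \<Psi> a, letter_image \<Psi> b]
   \<or> \<Psi> [a, b] = [letter_image \<Psi> b, letter_image \<Psi> a]"
proof -
  let ?f = "letter_image \<Psi>"
  have agree: "\<Psi> u = map ?f u" if "length u < 2" for u
    using that by (cases u) (auto simp: symmetry_Nil symmetry_singleton)
  have "count (mset (\<Psi> [a, b])) c = count (mset (map ?f [a, b])) c" for c
    using occ_symmetry_eq_if_agree_below[OF occ_map[OF inj_letter_image] agree,
        where u = "[c]" and v = "[a, b]"]
    by (simp add: occ_singleton)
  then have "mset (\<Psi> [a, b]) = mset (map ?f [a, b])"
    by (rule multiset_eqI)
  then show ?thesis
    using mset_eq_length_2_imp_eq_or_rev length_symmetry[of "[a, b]"] by fastforce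
qed

lemma symmetry_pair_swap: "\<Psi> [b, a] = rev (\<Psi> [a, b])"
proof (cases "a = b")
  case True
  then show ?thesis
    using symmetry_pair[of a a] by auto
next
  case False
  let ?f = "letter_image \<Psi>"
  have "\<Psi> [b, a] \<noteq> \<Psi> [a, b]"
    using False inj_symmetry by (auto dest: injD)
  moreover have "?f a \<noteq> ?f b"
    using False inj_letter_image by (auto dest: injD)
  ultimately show ?thesis
    using symmetry_pair[of a b] symmetry_pair[of b a] by auto
qed

text \<open>Otherwise \<open>\<Psi> [b, a]\<close> and \<open>\<Psi> [a, c]\<close> would be the two factors of length 2 of
  \<open>\<Psi> [b, a, c]\<close>, both ending in the image of \<open>a\<close>, forcing a repeated letter.\<close>

lemma symmetry_pair_orientation_propagates:
  assumes "a \<noteq> b" "a \<noteq> c"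
    and ab: "\<Psi> [a, b] = [letter_image \<Psi> a, letter_image \<Psi> b]"
  shows "\<Psi> [a, c] = [letter_image \<Psi> a, letter_image \<Psi> c]"
proof (rule ccontr)
  let ?f = "letter_image \<Psi>"
  assume "\<Psi> [a, c] \<noteq> [?f a, ?f c]"
  then have ac: "\<Psi> [a, c] = [?f c, ?f a]"
    using symmetry_pair[of a c] by simp
  have ba: "\<Psi> [b, a] = [?f b, ?f a]"
    using ab symmetry_pair_swap[of a b] by simp
  obtain p q r where bac: "\<Psi> [b, a, c] = [p, q, r]"
    using length_symmetry[of "[b, a, c]"] by (auto simp: length_Suc_conv numeral_3_eq_3)
  have one_of: "P \<or> Q" if "of_bool P + of_bool Q = (1::nat)" for P Q
    using that by (cases P; cases Q) simp_all
  have "occ [?f b, ?f a] [p, q, r] = occ [b, a] [b, a, c]"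
    using occ_symmetry[of "[b, a]" "[b, a, c]"] ba bac by simp
  also have "\<dots> = 1"
    using assms(1) by (simp add: occ_pair_triple)
  finally have "[?f b, ?f a] = [p, q] \<or> [?f b, ?f a] = [q, r]"
    unfolding occ_pair_triple by (rule one_of)
  moreover have "occ [?f c, ?f a] [p, q, r] = occ [a, c] [b, a, c]"
    using occ_symmetry[of "[a, c]" "[b, a, c]"] ac bac by simp
  then have "[?f c, ?f a] = [p, q] \<or> [?f c, ?f a] = [q, r]"
    using assms(1) unfolding occ_pair_triple by (intro one_of) simp
  moreover have "?f a \<noteq> ?f b" "?f a \<noteq> ?f c"
    using assms(1,2) inj_letter_image by (auto dest: injD)
  moreover have "?f b \<noteq> ?f c"
  proof
    assume "?f b = ?f c"
    then have "[?f a, ?f b] = [?f b, ?f a]"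
      using ab ac inj_letter_image by (metis injD)
    with \<open>?f a \<noteq> ?f b\<close> show False
      by simp
  qed
  ultimately show False
    by auto
qed

lemma symmetry_pairs_uniform:
  "(\<forall>a b. \<Psi> [a, b] = [letter_image \<Psi> a, letter_image \<Psi> b])
   \<or> (\<forall>a b. \<Psi> [a, b] = [letter_image \<Psi> b, letter_image \<Psi> a])"
proof (rule ccontr)
  let ?f = "letter_image \<Psi>"
  assume "\<not> ?thesis"
  then obtain a b c d
    where ab: "\<Psi> [a, b] \<noteq> [?f a, ?f b]" and cd: "\<Psi> [c, d] \<noteq> [?f d, ?f c]"
    by blast
  have "a \<noteq> b"
    using ab symmetry_pair[of a a] by auto
  have "c \<noteq> d"
    using cd symmetry_pair[of c c] by auto
  have cd': "\<Psi> [c, d] = [?f c, ?f d]"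
    using cd symmetry_pair[of c d] by auto
  have "\<Psi> [a, b] = [?f a, ?f b]"
  proof (cases "a = c")
    case True
    then show ?thesis
      using symmetry_pair_orientation_propagates[of c d b] \<open>a \<noteq> b\<close> \<open>c \<noteq> d\<close> cd' by simp
  next
    case False
    then have "\<Psi> [c, a] = [?f c, ?f a]"
      using symmetry_pair_orientation_propagates[of c d a] \<open>c \<noteq> d\<close> cd' by simp
    then have "\<Psi> [a, c] = [?f a, ?f c]"
      using symmetry_pair_swap[of c a] by simp
    with False show ?thesis
      using symmetry_pair_orientation_propagates[of a c b] \<open>a \<noteq> b\<close> by simp
  qed
  with ab show False ..
qed

end

theorem lemma15:
  fixes \<Psi> :: "'a::finite list \<Rightarrow> 'a list"
  assumes "symmetry \<Psi>"
  shows "morphism \<Psi> \<or> antimorphism \<Psi>"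
proof -
  let ?f = "letter_image \<Psi>"
  have occ_f: "occ (map ?f u) (map ?f v) = occ u v" for u v
    using assms by (simp add: occ_map inj_letter_image)
  from symmetry_pairs_uniform[OF assms] show ?thesis
  proof
    assume "\<forall>a b. \<Psi> [a, b] = [?f a, ?f b]"
    then have "\<Psi> v = map ?f v" for v
      using symmetry_eqI[OF assms, where g = "map ?f"] occ_f
      by (simp add: symmetry_singleton[OF assms])
    then show ?thesis
      by (simp add: morphism_def)
  next
    assume "\<forall>a b. \<Psi> [a, b] = [?f b, ?f a]"
    then have "\<Psi> v = rev (map ?f v)" for v
      using symmetry_eqI[OF assms, where g = "\<lambda>v. rev (map ?f v)"] occ_f
      by (simp add: occ_rev symmetry_singleton[OF assms])
    then show ?thesis
      by (simp add: antimorphism_def)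
  qed
qed

end
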